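(* Let $w \in \mathfrak{S}_n$ be a prism and let $i \in \textsf{supp}(w)$ be unconfined in the reduced words of $w$, with $|\{i-1,i+1\} \cap \textsf{supp}(w)| \le 1$. If $i+1 \notin \textsf{supp}(w)$, then $w$ contains the calibrated mesh pattern $(21, \{(0,1),(1,1),(2,1)\})$ with calibration $x_2 = i+1$, $y_2 = i+1$, or the calibrated mesh pattern $(21, \{(1,0),(1,1),(1,2)\})$ with calibration $x_2 = i+1$, $y_2 = i+1$. If $i-1 \notin \textsf{supp}(w)$, then $w$ contains the calibrated mesh pattern $(21, \{(0,1),(1,1),(2,1)\})$ with calibration $x_1 = i$, $y_1 = i$, or the calibrated mesh pattern $(21, \{(1,0),(1,1),(1,2)\})$ with calibration $x_1 = i$, $y_1 = i$.
   Context: Reduced words, support, Bruhat order: $\sigma_i$ swaps $i,i+1$; a reduced word of $w$ is a minimal-length word $i_1\cdots i_\ell$ with $w=\sigma_{i_1}\cdots\sigma_{i_\ell}$; $\textsf{supp}(w)$ is the set of letters in any reduced word; $u\preceq w$ iff a reduced word of $u$ is a subword of one of $w$; $B(w)=\{u:u\preceq w\}$; $w$ is a prism if $B(w)\cong\mathbf{2}\times X$ for some poset $X$ ($\mathbf{2}$ the two-element chain). A letter $i$ appearing exactly once in a reduced word $s$ is unconfined in $s$ if that occurrence is neither between two $i+1$'s nor between two $i-1$'s; this then holds in all reduced words of $w$. Calibrated mesh patterns: let $p \in \mathfrak{S}_k$ and $M \subseteq \{0,\dots,k\}^2$ (cell $(a,b)$ is the unit square with lower-left corner $(a,b)$ in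 the grid $[0,k+1]^2$ containing the graph $\{(j,p(j))\}$ of $p$). An occurrence of $p$ in $w \in \mathfrak{S}_n$ is a choice of positions $x_1<\cdots<x_k$ such that $w(x_1)\cdots w(x_k)$ is in the same relative order as $p(1)\cdots p(k)$; let $y_1<\cdots<y_k$ be the values $\{w(x_1),\dots,w(x_k)\}$ in increasing order, and set $x_0=y_0=0$, $x_{k+1}=y_{k+1}=n+1$. Such an occurrence is an occurrence of the mesh pattern $(p,M)$ if for every $(a,b)\in M$ there is no $x$ with $x_a < x < x_{a+1}$ and $y_b < w(x) < y_{b+1}$. A calibrated mesh pattern additionally prescribes values for some of the $x_a$ and $y_b$; $w$ contains it if $w$ has an occurrence of $(p,M)$ meeting those prescriptions. Here $21\in\mathfrak{S}_2$ is the permutation $2\,1$. *)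

theory Defs
  imports "HOL-Combinatorics.Combinatorics" "HOL-Library.Sublist"
begin

text \<open>Permutations of {1..n} are functions nat => nat with w permutes {1..n}.
  The simple transposition sigma_i swaps i and i+1.\<close>

definition sigma :: "nat \<Rightarrow> nat \<Rightarrow> nat" where
  "sigma i = Transposition.transpose i (Suc i)"

definition word_perm :: "nat list \<Rightarrow> nat \<Rightarrow> nat" where
  "word_perm ws = foldr (\<lambda>i f. sigma i \<circ> f) ws id"

definition is_word :: "nat \<Rightarrow> nat list \<Rightarrow> bool" where
  "is_word n ws \<longleftrightarrow> set ws \<subseteq> {1..<n}"

definition reduced_word :: "nat \<Rightarrow> (nat \<Rightarrow> nat) \<Rightarrow> nat list \<Rightarrow> bool" where
  "reduced_word n w ws \<longleftrightarrow> is_word n ws \<and> word_perm ws = w \<and>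
     (\<forall>vs. is_word n vs \<and> word_perm vs = w \<longrightarrow> length ws \<le> length vs)"

definition supp :: "nat \<Rightarrow> (nat \<Rightarrow> nat) \<Rightarrow> nat set" where
  "supp n w = {i. \<exists>ws. reduced_word n w ws \<and> i \<in> set ws}"

definition bruhat_le :: "nat \<Rightarrow> (nat \<Rightarrow> nat) \<Rightarrow> (nat \<Rightarrow> nat) \<Rightarrow> bool" where
  "bruhat_le n u w \<longleftrightarrow> (\<exists>us ws. reduced_word n u us \<and> reduced_word n w ws \<and> subseq us ws)"

definition bruhat_interval :: "nat \<Rightarrow> (nat \<Rightarrow> nat) \<Rightarrow> (nat \<Rightarrow> nat) set" where
  "bruhat_interval n w = {u. u permutes {1..n} \<and> bruhat_le n u w}"

text \<open>w is a prism if B(w) (ordered by Bruhat order) is isomorphic to 2 x X for a poset X.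
  Since B(w) is finite, X may be taken to have carrier a subset of nat.
  The chain 2 is bool with False < True; 2 x X carries the product order.\<close>
definition prism :: "nat \<Rightarrow> (nat \<Rightarrow> nat) \<Rightarrow> bool" where
  "prism n w \<longleftrightarrow> (\<exists>(X :: nat set) (leX :: nat \<Rightarrow> nat \<Rightarrow> bool) (f :: (nat \<Rightarrow> nat) \<Rightarrow> bool \<times> nat).
     (\<forall>x\<in>X. leX x x) \<and>
     (\<forall>x\<in>X. \<forall>y\<in>X. leX x y \<and> leX y x \<longrightarrow> x = y) \<and>
     (\<forall>x\<in>X. \<forall>y\<in>X. \<forall>z\<in>X. leX x y \<and> leX y z \<longrightarrow> leX x z) \<and>
     bij_betw f (bruhat_interval n w) (UNIV \<times> X) \<and>
     (\<forall>u\<in>bruhat_interval n w. \<forall>v\<in>bruhat_interval n w.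
        bruhat_le n u v \<longleftrightarrow> (fst (f u) \<le> fst (f v) \<and> leX (snd (f u)) (snd (f v)))))"

definition unconfined :: "nat \<Rightarrow> nat list \<Rightarrow> bool" where
  "unconfined i s \<longleftrightarrow> count_list s i = 1 \<and>
     (\<forall>j < length s. s ! j = i \<longrightarrow>
        \<not> (\<exists>a b. a < j \<and> j < b \<and> b < length s \<and> s ! a = i + 1 \<and> s ! b = i + 1) \<and>
        \<not> (\<exists>a b. a < j \<and> j < b \<and> b < length s \<and> i \<ge> 1 \<and> s ! a = i - 1 \<and> s ! b = i - 1))"

definition mesh_occurrence ::
  "nat \<Rightarrow> (nat \<Rightarrow> nat) \<Rightarrow> nat \<Rightarrow> (nat \<Rightarrow> nat) \<Rightarrow> (nat \<times> nat) set \<Rightarrow> (nat \<Rightarrow> nat) \<Rightarrow> (nat \<Rightarrow> nat) \<Rightarrow> bool" where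
  "mesh_occurrence n w k p M x y \<longleftrightarrow>
     x 0 = 0 \<and> x (k + 1) = n + 1 \<and> y 0 = 0 \<and> y (k + 1) = n + 1 \<and>
     (\<forall>a. a \<le> k \<longrightarrow> x a < x (a + 1)) \<and>
     (\<forall>b. b \<le> k \<longrightarrow> y b < y (b + 1)) \<and>
     (\<forall>j\<in>{1..k}. \<forall>j'\<in>{1..k}. p j < p j' \<longleftrightarrow> w (x j) < w (x j')) \<and>
     y ` {1..k} = (\<lambda>j. w (x j)) ` {1..k} \<and>
     (\<forall>(a, b)\<in>M. \<not> (\<exists>z. x a < z \<and> z < x (a + 1) \<and> y b < w z \<and> w z < y (b + 1)))"

definition pat21 :: "nat \<Rightarrow> nat" where
  "pat21 = Transposition.transpose 1 2"

end

theory Submission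
  imports Defs
begin

(* Take a reduced word s = p i q of w; since i is unconfined it occurs only once, so
   w = P \<circ> sigma_i \<circ> Q with P, Q the products of p and q, neither containing i.
   Say i+1 is not in the support. Being unconfined, i also forces i-1 to be missing from p
   or from q. If i-1 is not in p, then P fixes i and i+1, so w sends i+1 to i and some
   position Q^-1(i) \<le> i to i+1: a 21 in adjacent values, whose shaded row is empty.
   If i-1 is not in q, then Q fixes i and i+1, so w sends i to i+1 and i+1 to P(i) \<le> i:
   a 21 in adjacent positions, whose shaded column is empty. The case i-1 \<notin> supp is
   symmetric. *)

lemma sigma_apply: "sigma j k = (if k = j then Suc j else if k = Suc j then j else k)"
  by (simp add: sigma_def transpose_def)

lemma word_perm_Nil [simp]: "word_perm [] = id"
  by (simp add: word_perm_def)

lemma word_perm_Cons [simp]: "word_perm (j # ws) = sigma j \<circ> word_perm ws"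
  by (simp add: word_perm_def)

lemma word_perm_append: "word_perm (xs @ ys) = word_perm xs \<circ> word_perm ys"
  by (induction xs) auto

lemma word_perm_fixed:
  assumes "k \<notin> set ws" "\<forall>j\<in>set ws. Suc j \<noteq> k"
  shows "word_perm ws k = k"
  using assms by (induction ws) (auto simp: sigma_apply)

lemma word_perm_rev_inverse: "word_perm ws (word_perm (rev ws) k) = k"
proof (induction ws arbitrary: k)
  case Nil
  then show ?case by simp
next
  case (Cons j ws)
  show ?case
    using Cons[of "sigma j k"] by (simp add: word_perm_append sigma_apply)
qed

lemma word_perm_preserves:
  assumes "\<forall>j\<in>set ws. sigma j ` S \<subseteq> S" "k \<in> S"
  shows "word_perm ws k \<in> S"
  using assms by (induction ws arbitrary: k) auto

lemma word_perm_preserves_lower_block: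
  assumes "set ws \<subseteq> {1..} - {m}" "k \<in> {1..m}"
  shows "word_perm ws k \<in> {1..m}"
  using assms by (intro word_perm_preserves) (auto simp: sigma_apply)

lemma word_perm_preserves_upper_block:
  assumes "set ws \<subseteq> {..<n} - {m}" "k \<in> {Suc m..n}"
  shows "word_perm ws k \<in> {Suc m..n}"
  using assms by (intro word_perm_preserves) (auto simp: sigma_apply)

lemma pat21_simps [simp]: "pat21 (Suc 0) = 2" "pat21 2 = Suc 0"
  by (simp_all add: pat21_def transpose_def)

lemma mesh_occurrence_21_adjacent_values:
  assumes "1 \<le> a" "a < b" "b \<le> n" "w a = v + 1" "w b = v" "1 \<le> v" "v < n"
  shows "\<exists>x y. mesh_occurrence n w 2 pat21 {(0,1),(1,1),(2,1)} x y \<and>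
           x 1 = a \<and> x 2 = b \<and> y 1 = v \<and> y 2 = v + 1"
proof (intro exI conjI)
  have "{1..2::nat} = {1, 2}" by auto
  then show "mesh_occurrence n w 2 pat21 {(0,1),(1,1),(2,1)}
      (\<lambda>k. if k = 0 then 0 else if k = 1 then a else if k = 2 then b else n + 1)
      (\<lambda>k. if k = 0 then 0 else if k = 1 then v else if k = 2 then v + 1 else n + 1)"
    using assms unfolding mesh_occurrence_def by auto
qed simp_all

lemma mesh_occurrence_21_adjacent_positions:
  assumes "1 \<le> a" "a < n" "w a = u" "w (a + 1) = v" "1 \<le> v" "v < u" "u \<le> n"
  shows "\<exists>x y. mesh_occurrence n w 2 pat21 {(1,0),(1,1),(1,2)} x y \<and>
           x 1 = a \<and> x 2 = a + 1 \<and> y 1 = v \<and> y 2 = u"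
proof (intro exI conjI)
  have "{1..2::nat} = {1, 2}" by auto
  then show "mesh_occurrence n w 2 pat21 {(1,0),(1,1),(1,2)}
      (\<lambda>k. if k = 0 then 0 else if k = 1 then a else if k = 2 then a + 1 else n + 1)
      (\<lambda>k. if k = 0 then 0 else if k = 1 then v else if k = 2 then u else n + 1)"
    using assms unfolding mesh_occurrence_def by auto
qed simp_all

lemma unconfined_no_sandwich:
  assumes "unconfined i s" "j < length s" "s ! j = i" "a < j" "j < b" "b < length s"
    and "s ! a = c" "s ! b = c"
  shows "c \<noteq> i + 1" "1 \<le> i \<Longrightarrow> c \<noteq> i - 1"
  using assms unfolding unconfined_def by blast+

lemma unconfined_not_both_sides:
  assumes "unconfined i (p @ i # q)" "c \<in> set p" "c \<in> set q"
  shows "c \<noteq> i + 1" "1 \<le> i \<Longrightarrow> c \<noteq> i - 1"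
proof -
  let ?s = "p @ i # q"
  obtain a b where a: "a < length p" "p ! a = c" and b: "b < length q" "q ! b = c"
    using assms(2,3) by (auto simp: in_set_conv_nth)
  then have sandwich: "length p < length ?s" "?s ! length p = i" "a < length p"
    "length p < length p + 1 + b" "length p + 1 + b < length ?s"
    "?s ! a = c" "?s ! (length p + 1 + b) = c"
    by (simp_all add: nth_append)
  show "c \<noteq> i + 1"
    using unconfined_no_sandwich(1)[OF assms(1) sandwich] .
  show "c \<noteq> i - 1" if "1 \<le> i"
    using unconfined_no_sandwich(2)[OF assms(1) sandwich that] .
qed

lemma occurrence_at_upper_neighbour:
  assumes w: "w = word_perm (p @ i # q)" and i: "1 \<le> i" "i < n"
    and letters: "set p \<union> set q \<subseteq> {1..<n} - {i, i + 1}"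
    and "i - 1 \<notin> set p \<or> i - 1 \<notin> set q"
  shows "(\<exists>x y. mesh_occurrence n w 2 pat21 {(0,1),(1,1),(2,1)} x y \<and> x 2 = i + 1 \<and> y 2 = i + 1) \<or>
         (\<exists>x y. mesh_occurrence n w 2 pat21 {(1,0),(1,1),(1,2)} x y \<and> x 2 = i + 1 \<and> y 2 = i + 1)"
  using assms(5)
proof
  assume "i - 1 \<notin> set p"
  then have p_fixes: "word_perm p i = i" "word_perm p (i + 1) = i + 1"
    using letters i by (auto intro!: word_perm_fixed)
  have "word_perm q (i + 1) = i + 1"
    using letters by (auto intro!: word_perm_fixed)
  then have "w (i + 1) = i"
    using p_fixes by (simp add: w word_perm_append sigma_apply)
  moreover define a where "a = word_perm (rev q) i"
  then have "w a = i + 1"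
    using p_fixes by (simp add: w word_perm_append sigma_apply word_perm_rev_inverse)
  moreover have "a \<in> {1..i}"
    unfolding a_def using letters i by (intro word_perm_preserves_lower_block) auto
  ultimately have "\<exists>x y. mesh_occurrence n w 2 pat21 {(0,1),(1,1),(2,1)} x y \<and>
      x 1 = a \<and> x 2 = i + 1 \<and> y 1 = i \<and> y 2 = i + 1"
    using i by (intro mesh_occurrence_21_adjacent_values) auto
  then show ?thesis by blast
next
  assume "i - 1 \<notin> set q"
  then have q_fixes: "word_perm q i = i" "word_perm q (i + 1) = i + 1"
    using letters i by (auto intro!: word_perm_fixed)
  have "word_perm p (i + 1) = i + 1"
    using letters by (auto intro!: word_perm_fixed)
  then have "w i = i + 1"
    using q_fixes by (simp add: w word_perm_append sigma_apply)
  moreover have "w (i + 1) = word_perm p i"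
    using q_fixes by (simp add: w word_perm_append sigma_apply)
  moreover have "word_perm p i \<in> {1..i}"
    using letters i by (intro word_perm_preserves_lower_block) auto
  ultimately have "\<exists>x y. mesh_occurrence n w 2 pat21 {(1,0),(1,1),(1,2)} x y \<and>
      x 1 = i \<and> x 2 = i + 1 \<and> y 1 = word_perm p i \<and> y 2 = i + 1"
    using i by (intro mesh_occurrence_21_adjacent_positions) auto
  then show ?thesis by blast
qed

lemma occurrence_at_lower_neighbour:
  assumes w: "w = word_perm (p @ i # q)" and i: "1 \<le> i" "i < n"
    and letters: "set p \<union> set q \<subseteq> {1..<n} - {i - 1, i}"
    and "i + 1 \<notin> set p \<or> i + 1 \<notin> set q"
  shows "(\<exists>x y. mesh_occurrence n w 2 pat21 {(0,1),(1,1),(2,1)} x y \<and> x 1 = i \<and> y 1 = i) \<or>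
         (\<exists>x y. mesh_occurrence n w 2 pat21 {(1,0),(1,1),(1,2)} x y \<and> x 1 = i \<and> y 1 = i)"
  using assms(5)
proof
  assume "i + 1 \<notin> set p"
  then have p_fixes: "word_perm p i = i" "word_perm p (i + 1) = i + 1"
    using letters i by (auto intro!: word_perm_fixed)
  have "word_perm q i = i"
    using letters i by (auto intro!: word_perm_fixed)
  then have "w i = i + 1"
    using p_fixes by (simp add: w word_perm_append sigma_apply)
  moreover define b where "b = word_perm (rev q) (i + 1)"
  then have "w b = i"
    using p_fixes by (simp add: w word_perm_append sigma_apply word_perm_rev_inverse)
  moreover have "b \<in> {Suc i..n}"
    unfolding b_def using letters i by (intro word_perm_preserves_upper_block) auto
  ultimately have "\<exists>x y. mesh_occurrence n w 2 pat21 {(0,1),(1,1),(2,1)} x y \<and>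
      x 1 = i \<and> x 2 = b \<and> y 1 = i \<and> y 2 = i + 1"
    using i by (intro mesh_occurrence_21_adjacent_values) auto
  then show ?thesis by blast
next
  assume "i + 1 \<notin> set q"
  then have q_fixes: "word_perm q i = i" "word_perm q (i + 1) = i + 1"
    using letters i by (auto intro!: word_perm_fixed)
  have "word_perm p i = i"
    using letters i by (auto intro!: word_perm_fixed)
  then have "w (i + 1) = i"
    using q_fixes by (simp add: w word_perm_append sigma_apply)
  moreover have "w i = word_perm p (i + 1)"
    using q_fixes by (simp add: w word_perm_append sigma_apply)
  moreover have "word_perm p (i + 1) \<in> {Suc i..n}"
    using letters i by (intro word_perm_preserves_upper_block) auto
  ultimately have "\<exists>x y. mesh_occurrence n w 2 pat21 {(1,0),(1,1),(1,2)} x y \<and>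
      x 1 = i \<and> x 2 = i + 1 \<and> y 1 = i \<and> y 2 = word_perm p (i + 1)"
    using i by (intro mesh_occurrence_21_adjacent_positions) auto
  then show ?thesis by blast
qed

theorem proposition3p5:
  fixes n i :: nat and w :: "nat \<Rightarrow> nat"
  assumes "w permutes {1..n}"
    and "prism n w"
    and "i \<in> supp n w"
    and "\<forall>s. reduced_word n w s \<longrightarrow> unconfined i s"
    and "card ({i - 1, i + 1} \<inter> supp n w) \<le> 1"
  shows "(i + 1 \<notin> supp n w \<longrightarrow>
            (\<exists>x y. mesh_occurrence n w 2 pat21 {(0,1),(1,1),(2,1)} x y \<and> x 2 = i + 1 \<and> y 2 = i + 1) \<or>
            (\<exists>x y. mesh_occurrence n w 2 pat21 {(1,0),(1,1),(1,2)} x y \<and> x 2 = i + 1 \<and> y 2 = i + 1))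
       \<and> (i - 1 \<notin> supp n w \<longrightarrow>
            (\<exists>x y. mesh_occurrence n w 2 pat21 {(0,1),(1,1),(2,1)} x y \<and> x 1 = i \<and> y 1 = i) \<or>
            (\<exists>x y. mesh_occurrence n w 2 pat21 {(1,0),(1,1),(1,2)} x y \<and> x 1 = i \<and> y 1 = i))"
proof -
  obtain s where s: "reduced_word n w s" "i \<in> set s"
    using assms(3) unfolding supp_def by blast
  obtain p q where split: "s = p @ i # q" "i \<notin> set p"
    using split_list_first[OF s(2)] by blast
  have unconf: "unconfined i (p @ i # q)"
    using assms(4) s(1) split(1) by blast
  then have "i \<notin> set q"
    using split(2) by (simp add: unconfined_def count_list_0_iff)
  have w: "w = word_perm (p @ i # q)" and "set s \<subseteq> {1..<n}"
    using s(1) split(1) unfolding reduced_word_def is_word_def by auto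
  then have i: "1 \<le> i" "i < n"
    using s(2) by auto
  have neighbours: "i + 1 \<notin> set p \<or> i + 1 \<notin> set q" "i - 1 \<notin> set p \<or> i - 1 \<notin> set q"
    using unconfined_not_both_sides[OF unconf] i by auto
  have "set s \<subseteq> supp n w"
    using s(1) unfolding supp_def by blast
  then have letters: "set p \<union> set q \<subseteq> ({1..<n} \<inter> supp n w) - {i}"
    using \<open>set s \<subseteq> {1..<n}\<close> split \<open>i \<notin> set q\<close> by auto
  show ?thesis
  proof (intro conjI impI occurrence_at_upper_neighbour[OF w i _ neighbours(2)]
      occurrence_at_lower_neighbour[OF w i _ neighbours(1)])
    show "set p \<union> set q \<subseteq> {1..<n} - {i, i + 1}" if "i + 1 \<notin> supp n w"
      using that letters by auto
    show "set p \<union> set q \<subseteq> {1..<n} - {i - 1, i}" if "i - 1 \<notin> supp n w"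
      using that letters by auto
  qed
qed

end
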